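(* Let $\mathcal{P}=\langle P,\le\rangle$ be a finite bounded poset with $|P|\ge 2$ and $m\in\mathbb{N}$. If $(R^+_{All})^m(\mathcal{P})$ is graded, then $(R^+)^m(\mathcal{P})$ is graded.
   Context: A poset is bounded if it has a least element $\bot$ and greatest element $\top$. The height $H$ of a finite poset is the number of elements in its largest chain. $a\lessdot b$ denotes covering. A bounded poset with top $\top$ and height $H$ is graded if there is $\rho$ into $\{0,\dots,H-1\}$ with $\rho(\top)=0$ and $\rho(a)=\rho(b)-1$ whenever $a\lessdot b$. For $a\in P$, $\uparrow a=\{b:b\ge a\}$, $\downarrow a=\{b:b\le a\}$ as subposets; the standard interval rank is $R^+(a)=[H(\uparrow a)-1,\;H(\mathcal{P})-H(\downarrow a)]$. Weak order: $[x_*,x^*]\le_W[y_*,y^*]$ iff $x_*\le y_*$ and $x^*\le y^*$. The interval rank poset $R^+(\mathcal{P})$ is the set $\{R^+(a):a\in P\}$ ordered by $\ge_W$; $(R^+)^m$ denotes its $m$-fold iteration (applying the construction to the resulting poset each time). $R^+_{All}(\mathcal{P})=\langle P,\le_{R_A}\rangle$ on the same underlying set, where $p<_{R_A}q$ iff $R^+(p)>_W R^+(q)$, and $\le_{R_A}$ is the reflexive closure of $<_{R_A}$; $(R^+_{All})^m$ is its $m$-fold iteration. *)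

theory Defs
  imports Main
begin

type_synonym 'a poset = "'a set \<times> ('a \<Rightarrow> 'a \<Rightarrow> bool)"

definition is_poset :: "'a poset \<Rightarrow> bool" where
  "is_poset P \<longleftrightarrow> (case P of (A, le) \<Rightarrow>
     (\<forall>x\<in>A. le x x) \<and>
     (\<forall>x\<in>A. \<forall>y\<in>A. le x y \<and> le y x \<longrightarrow> x = y) \<and>
     (\<forall>x\<in>A. \<forall>y\<in>A. \<forall>z\<in>A. le x y \<and> le y z \<longrightarrow> le x z))"

definition is_bot :: "'a poset \<Rightarrow> 'a \<Rightarrow> bool" where
  "is_bot P b \<longleftrightarrow> b \<in> fst P \<and> (\<forall>x\<in>fst P. snd P b x)"

definition is_top :: "'a poset \<Rightarrow> 'a \<Rightarrow> bool" where
  "is_top P t \<longleftrightarrow> t \<in> fst P \<and> (\<forall>x\<in>fst P. snd P x t)"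

definition bounded_poset :: "'a poset \<Rightarrow> bool" where
  "bounded_poset P \<longleftrightarrow> is_poset P \<and> (\<exists>b. is_bot P b) \<and> (\<exists>t. is_top P t)"

definition is_chain :: "'a poset \<Rightarrow> 'a set \<Rightarrow> bool" where
  "is_chain P C \<longleftrightarrow> C \<subseteq> fst P \<and> (\<forall>x\<in>C. \<forall>y\<in>C. snd P x y \<or> snd P y x)"

definition height :: "'a poset \<Rightarrow> nat" where
  "height P = Max (card ` {C. is_chain P C})"

definition covered_by :: "'a poset \<Rightarrow> 'a \<Rightarrow> 'a \<Rightarrow> bool" where
  "covered_by P a b \<longleftrightarrow> a \<in> fst P \<and> b \<in> fst P \<and> snd P a b \<and> a \<noteq> b \<and>
     \<not> (\<exists>c\<in>fst P. snd P a c \<and> snd P c b \<and> c \<noteq> a \<and> c \<noteq> b)"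

definition graded :: "'a poset \<Rightarrow> bool" where
  "graded P \<longleftrightarrow> bounded_poset P \<and>
     (\<exists>\<rho> :: 'a \<Rightarrow> nat.
        (\<forall>x\<in>fst P. \<rho> x < height P) \<and>
        (\<forall>t. is_top P t \<longrightarrow> \<rho> t = 0) \<and>
        (\<forall>a b. covered_by P a b \<longrightarrow> \<rho> a = \<rho> b + 1))"

definition up_set :: "'a poset \<Rightarrow> 'a \<Rightarrow> 'a poset" where
  "up_set P a = ({b\<in>fst P. snd P a b}, snd P)"

definition down_set :: "'a poset \<Rightarrow> 'a \<Rightarrow> 'a poset" where
  "down_set P a = ({b\<in>fst P. snd P b a}, snd P)"

definition interval_rank :: "'a poset \<Rightarrow> 'a \<Rightarrow> nat \<times> nat" where
  "interval_rank P a = (height (up_set P a) - 1, height P - height (down_set P a))"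

definition weak_le :: "nat \<times> nat \<Rightarrow> nat \<times> nat \<Rightarrow> bool" where
  "weak_le x y \<longleftrightarrow> fst x \<le> fst y \<and> snd x \<le> snd y"

definition Rplus :: "'a poset \<Rightarrow> (nat \<times> nat) poset" where
  "Rplus P = (interval_rank P ` fst P, \<lambda>x y. weak_le y x)"

definition RAll :: "'a poset \<Rightarrow> 'a poset" where
  "RAll P = (fst P, \<lambda>p q. p = q \<or>
       (weak_le (interval_rank P q) (interval_rank P p) \<and> interval_rank P q \<noteq> interval_rank P p))"

text \<open>\<open>Rplus_iter k P\<close> is (R^+)^(k+1)(P) (the type changes after the first application).\<close>
fun Rplus_iter :: "nat \<Rightarrow> 'a poset \<Rightarrow> (nat \<times> nat) poset" where
  "Rplus_iter 0 P = Rplus P"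
| "Rplus_iter (Suc k) P = Rplus (Rplus_iter k P)"

definition RAll_iter :: "nat \<Rightarrow> 'a poset \<Rightarrow> 'a poset" where
  "RAll_iter m P = (RAll ^^ m) P"

end

theory Submission
  imports Defs
begin

text \<open>The order of \<open>R\<^sup>+\<^sub>A\<^sub>l\<^sub>l(Q)\<close> is pulled back strictly along the interval rank map
  \<open>Q \<rightarrow> R\<^sup>+(Q)\<close>: distinct \<open>p, q\<close> satisfy \<open>p < q\<close> iff their ranks are distinct and comparable.
  Call a surjection with this property a strict quotient. It is injective on chains and has an
  order-embedding section, so it preserves chain cardinalities, hence heights of the poset and
  of all up- and down-sets, hence interval ranks; therefore \<open>R\<^sup>+\<^sub>A\<^sub>l\<^sub>l\<close> of a strict quotient
  is a strict quotient of \<open>R\<^sup>+\<close>, and by induction \<open>(R\<^sup>+\<^sub>A\<^sub>l\<^sub>l)\<^sup>m(P)\<close> is a strict quotient of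
  \<open>(R\<^sup>+)\<^sup>m(P)\<close>. Gradedness descends along strict quotients: covers lift along the section
  and the top element has a singleton fibre.\<close>

lemma is_poset_iff:
  "is_poset P \<longleftrightarrow> (\<forall>x\<in>fst P. snd P x x) \<and>
     (\<forall>x\<in>fst P. \<forall>y\<in>fst P. snd P x y \<and> snd P y x \<longrightarrow> x = y) \<and>
     (\<forall>x\<in>fst P. \<forall>y\<in>fst P. \<forall>z\<in>fst P. snd P x y \<and> snd P y z \<longrightarrow> snd P x z)"
  by (cases P) (simp add: is_poset_def)

lemma is_chain_image:
  assumes "is_chain Q C" and "h ` C \<subseteq> fst Q'"
    and "\<And>x y. x \<in> C \<Longrightarrow> y \<in> C \<Longrightarrow> snd Q x y \<Longrightarrow> snd Q' (h x) (h y)"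
  shows "is_chain Q' (h ` C)"
  using assms unfolding is_chain_def by blast

lemma height_eqI:
  assumes "card ` {C. is_chain Q C} = card ` {D. is_chain Q' D}"
  shows "height Q = height Q'"
  using assms unfolding height_def by simp

locale strict_quotient =
  fixes Q :: "'a poset" and Q' :: "'b poset" and f :: "'a \<Rightarrow> 'b"
  assumes image_eq: "f ` fst Q = fst Q'"
    and refl: "\<And>p. p \<in> fst Q \<Longrightarrow> snd Q p p"
    and refl': "\<And>y. y \<in> fst Q' \<Longrightarrow> snd Q' y y"
    and le_iff: "\<And>p q. p \<in> fst Q \<Longrightarrow> q \<in> fst Q \<Longrightarrow> p \<noteq> q \<Longrightarrow>
                   snd Q p q \<longleftrightarrow> snd Q' (f p) (f q) \<and> f p \<noteq> f q"
begin

definition lift :: "'b \<Rightarrow> 'a" where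
  "lift = inv_into (fst Q) f"

lemma lift_in: "y \<in> fst Q' \<Longrightarrow> lift y \<in> fst Q"
  unfolding lift_def using image_eq by (metis inv_into_into)

lemma f_lift: "y \<in> fst Q' \<Longrightarrow> f (lift y) = y"
  unfolding lift_def using image_eq by (metis f_inv_into_f)

lemma f_in: "p \<in> fst Q \<Longrightarrow> f p \<in> fst Q'"
  using image_eq by blast

lemma mono: "p \<in> fst Q \<Longrightarrow> q \<in> fst Q \<Longrightarrow> snd Q p q \<Longrightarrow> snd Q' (f p) (f q)"
  using le_iff refl' f_in by (cases "p = q") auto

lemma lift_le_iff:
  assumes "x \<in> fst Q'" "y \<in> fst Q'"
  shows "snd Q (lift x) (lift y) \<longleftrightarrow> snd Q' x y"
proof (cases "x = y")
  case True
  then show ?thesis using assms refl refl' lift_in by simp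
next
  case False
  then have "lift x \<noteq> lift y" using assms f_lift by metis
  then show ?thesis using le_iff[OF lift_in lift_in] assms f_lift False by simp
qed

lemma inj_on_chain:
  assumes "is_chain Q C"
  shows "inj_on f C"
proof (rule inj_onI, rule ccontr)
  fix x y assume "x \<in> C" "y \<in> C" "f x = f y" "x \<noteq> y"
  moreover have "snd Q x y \<or> snd Q y x" "x \<in> fst Q" "y \<in> fst Q"
    using assms \<open>x \<in> C\<close> \<open>y \<in> C\<close> unfolding is_chain_def by blast+
  ultimately show False using le_iff by metis
qed

lemma height_eq: "height Q = height Q'"
proof (rule height_eqI, intro equalityI subsetI)
  fix n assume "n \<in> card ` {C. is_chain Q C}"
  then obtain C where C: "is_chain Q C" "n = card C" by blast
  have "is_chain Q' (f ` C)"
    using C is_chain_image[of Q C f Q'] mono f_in unfolding is_chain_def by blast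
  moreover have "card (f ` C) = n"
    using card_image[OF inj_on_chain[OF C(1)]] C(2) by simp
  ultimately show "n \<in> card ` {D. is_chain Q' D}" by force
next
  fix n assume "n \<in> card ` {D. is_chain Q' D}"
  then obtain D where D: "is_chain Q' D" "n = card D" by blast
  have sub: "D \<subseteq> fst Q'" using D(1) unfolding is_chain_def by blast
  have "is_chain Q (lift ` D)"
    using is_chain_image[OF D(1), of lift Q] sub lift_in lift_le_iff by blast
  moreover have "inj_on lift D"
    using sub f_lift by (metis inj_onI subsetD)
  then have "card (lift ` D) = n" using card_image D(2) by simp
  ultimately show "n \<in> card ` {C. is_chain Q C}" by force
qed

lemma restrict: "S \<subseteq> fst Q \<Longrightarrow> strict_quotient (S, snd Q) (f ` S, snd Q') f"
  by unfold_locales (auto intro: refl refl' f_in simp: le_iff subset_iff)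

lemma image_up_set: "p \<in> fst Q \<Longrightarrow> f ` fst (up_set Q p) = fst (up_set Q' (f p))"
  unfolding up_set_def
  using mono f_in refl image_eq le_iff by (fastforce simp: image_iff)

lemma image_down_set: "p \<in> fst Q \<Longrightarrow> f ` fst (down_set Q p) = fst (down_set Q' (f p))"
  unfolding down_set_def
  using mono f_in refl image_eq le_iff by (fastforce simp: image_iff)

lemma interval_rank_eq:
  assumes "p \<in> fst Q"
  shows "interval_rank Q p = interval_rank Q' (f p)"
proof -
  have "up_set Q p = (fst (up_set Q p), snd Q)" "down_set Q p = (fst (down_set Q p), snd Q)"
    "up_set Q' (f p) = (fst (up_set Q' (f p)), snd Q')"
    "down_set Q' (f p) = (fst (down_set Q' (f p)), snd Q')"
    unfolding up_set_def down_set_def by simp_all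
  moreover have "fst (up_set Q p) \<subseteq> fst Q" "fst (down_set Q p) \<subseteq> fst Q"
    unfolding up_set_def down_set_def by auto
  ultimately have "height (up_set Q p) = height (up_set Q' (f p))"
    "height (down_set Q p) = height (down_set Q' (f p))"
    using strict_quotient.height_eq[OF restrict] image_up_set[OF assms] image_down_set[OF assms]
    by metis+
  then show ?thesis unfolding interval_rank_def using height_eq by simp
qed

lemma RAll_Rplus: "strict_quotient (RAll Q) (Rplus Q') (interval_rank Q' \<circ> f)"
proof -
  have "(interval_rank Q' \<circ> f) ` fst Q = interval_rank Q' ` fst Q'"
    using image_eq by (metis image_comp)
  then show ?thesis
    by unfold_locales (auto simp: RAll_def Rplus_def weak_le_def interval_rank_eq)
qed

lemma is_poset:
  assumes "is_poset Q"
  shows "is_poset Q'"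
proof -
  have "x = y" if "x \<in> fst Q'" "y \<in> fst Q'" "snd Q' x y" "snd Q' y x" for x y
  proof -
    have "snd Q (lift x) (lift y)" "snd Q (lift y) (lift x)"
      using that lift_le_iff by simp_all
    then have "lift x = lift y"
      using assms lift_in[OF that(1)] lift_in[OF that(2)] unfolding is_poset_iff by blast
    then show ?thesis using that f_lift by metis
  qed
  moreover have "snd Q' x z"
    if "x \<in> fst Q'" "y \<in> fst Q'" "z \<in> fst Q'" "snd Q' x y" "snd Q' y z" for x y z
  proof -
    have "snd Q (lift x) (lift y)" "snd Q (lift y) (lift z)"
      using that lift_le_iff by simp_all
    then have "snd Q (lift x) (lift z)"
      using assms lift_in that(1-3) unfolding is_poset_iff by blast
    then show ?thesis using that lift_le_iff by simp
  qed
  ultimately show ?thesis unfolding is_poset_iff using refl' by blast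
qed

lemma is_bot: "is_bot Q b \<Longrightarrow> is_bot Q' (f b)"
  unfolding is_bot_def by (metis f_in image_eq imageE mono)

lemma is_top: "is_top Q t \<Longrightarrow> is_top Q' (f t)"
  unfolding is_top_def by (metis f_in image_eq imageE mono)

lemma top_fibre: "is_top Q t \<Longrightarrow> p \<in> fst Q \<Longrightarrow> f p = f t \<Longrightarrow> p = t"
  unfolding is_top_def by (metis le_iff)

lemma covered_by_lift:
  assumes "covered_by Q' x y"
  shows "covered_by Q (lift x) (lift y)"
proof -
  have x: "x \<in> fst Q'" and y: "y \<in> fst Q'" and "snd Q' x y" "x \<noteq> y"
    and no_between: "\<And>c. c \<in> fst Q' \<Longrightarrow> snd Q' x c \<Longrightarrow> snd Q' c y \<Longrightarrow> c = x \<or> c = y"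
    using assms unfolding covered_by_def by blast+
  have "c = lift x \<or> c = lift y"
    if c: "c \<in> fst Q" "snd Q (lift x) c" "snd Q c (lift y)" for c
  proof (rule ccontr)
    assume "\<not> (c = lift x \<or> c = lift y)"
    then have "f c \<noteq> x" "f c \<noteq> y"
      using le_iff[OF lift_in[OF x] c(1)] le_iff[OF c(1) lift_in[OF y]] c f_lift x y by auto
    moreover have "snd Q' x (f c)" "snd Q' (f c) y"
      using mono[OF lift_in[OF x] c(1)] mono[OF c(1) lift_in[OF y]] c f_lift x y by auto
    ultimately show False using no_between f_in[OF c(1)] by blast
  qed
  moreover have "snd Q (lift x) (lift y)" "lift x \<noteq> lift y"
    using lift_le_iff x y \<open>snd Q' x y\<close> \<open>x \<noteq> y\<close> f_lift by metis+
  ultimately show ?thesis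
    unfolding covered_by_def using lift_in x y by blast
qed

lemma graded: "graded Q \<Longrightarrow> graded Q'"
proof -
  assume "graded Q"
  then obtain \<rho> where "bounded_poset Q"
    and below: "\<forall>x\<in>fst Q. \<rho> x < height Q"
    and top: "\<forall>t. is_top Q t \<longrightarrow> \<rho> t = 0"
    and cover: "\<forall>a b. covered_by Q a b \<longrightarrow> \<rho> a = \<rho> b + 1"
    unfolding graded_def by blast
  then obtain b t where b: "is_bot Q b" and t: "is_top Q t"
    and poset: "is_poset Q" unfolding bounded_poset_def by blast
  have poset': "is_poset Q'" using is_poset[OF poset] .
  have lift_top: "lift s = t" if "is_top Q' s" for s
  proof -
    have "s = f t"
      using that is_top[OF t] poset' unfolding is_top_def is_poset_iff by blast
    then show ?thesis
      using that top_fibre[OF t] lift_in f_lift unfolding is_top_def by blast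
  qed
  have "(\<forall>x\<in>fst Q'. (\<rho> \<circ> lift) x < height Q') \<and> (\<forall>s. is_top Q' s \<longrightarrow> (\<rho> \<circ> lift) s = 0) \<and>
      (\<forall>x y. covered_by Q' x y \<longrightarrow> (\<rho> \<circ> lift) x = (\<rho> \<circ> lift) y + 1)"
    using below top cover lift_in height_eq t lift_top covered_by_lift by auto
  moreover have "bounded_poset Q'"
    unfolding bounded_poset_def using poset' is_bot[OF b] is_top[OF t] by blast
  ultimately show "graded Q'" unfolding graded_def by blast
qed

end

lemma strict_quotient_self: "(\<forall>x\<in>fst P. snd P x x) \<Longrightarrow> strict_quotient P P id"
  by unfold_locales auto

lemma RAll_iter_strict_quotient_Rplus_iter:
  assumes "\<forall>x\<in>fst P. snd P x x"
  shows "\<exists>f. strict_quotient (RAll_iter (Suc k) P) (Rplus_iter k P) f"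
proof (induction k)
  case 0
  show ?case
    using strict_quotient.RAll_Rplus[OF strict_quotient_self[OF assms]]
    unfolding RAll_iter_def by auto
next
  case (Suc k)
  then show ?case
    unfolding RAll_iter_def by (auto dest: strict_quotient.RAll_Rplus)
qed

theorem lemma2:
  fixes P :: "'a poset" and m :: nat
  assumes "finite (fst P)"
    and "bounded_poset P"
    and "card (fst P) \<ge> 2"
    and "graded (RAll_iter m P)"
  shows "if m = 0 then graded P else graded (Rplus_iter (m - 1) P)"
proof (cases m)
  case 0
  then show ?thesis using assms(4) unfolding RAll_iter_def by simp
next
  case (Suc k)
  have "\<forall>x\<in>fst P. snd P x x"
    using assms(2) unfolding bounded_poset_def is_poset_iff by blast
  then obtain f where "strict_quotient (RAll_iter (Suc k) P) (Rplus_iter k P) f"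
    using RAll_iter_strict_quotient_Rplus_iter by blast
  then have "graded (Rplus_iter k P)"
    using strict_quotient.graded assms(4) Suc by blast
  then show ?thesis using Suc by simp
qed

end
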